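(* For $a>0$, real $b$, and $|q|<1$, $$\sum_{i,j\geq 0} \frac{q^{a(i-j)^2+b(i-j)+\frac{j(j+1)}{2}}}{(q;q)_i(q;q)_j} =(-q;q)_\infty \sum_{i,j\geq 0} \frac{q^{a(i-j)^2+b(i-j)+\frac{j(j+1)}{2}+ij}}{(q;q)_i(q^2;q^2)_j}.$$
   Context: Standard $q$-Pochhammer notation: $(a;q)_0=1$, $(a;q)_n=\prod_{k=0}^{n-1}(1-aq^k)$, $(a;q)_\infty=\prod_{k=0}^{\infty}(1-aq^k)$. *)

theory Defs
  imports "HOL-Analysis.Analysis"
begin

definition qpoch :: "complex \<Rightarrow> complex \<Rightarrow> nat \<Rightarrow> complex" where
  "qpoch a q n = (\<Prod>k<n. 1 - a * q ^ k)"

definition qpoch_inf :: "complex \<Rightarrow> complex \<Rightarrow> complex" where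
  "qpoch_inf a q = (\<Prod>k. 1 - a * q ^ k)"

end

theory Submission
  imports Defs
begin

text \<open>
  Write \<open>(x;q)_j = \<Sum>_s c(j,s) x^s\<close>. The recursion \<open>(x;q)_{j+1} = (x;q)_j (1 - x q^j)\<close>
  gives \<open>q^{ij}/(q;q)_i = \<Sum>_s c(j,s)/(q;q)_{i-s}\<close>. Inserting this into the right-hand side and
  putting \<open>i = t + s\<close>, \<open>j = n + s\<close>, which does not change the weight at \<open>i - j\<close>, yields a triple
  sum whose sum over \<open>s\<close> is
  \<open>\<Sum>_s c(n+s,s) q^{T(n+s)}/(q^2;q^2)_{n+s} = q^{T(n)}/((q;q)_n (-q;q)_\<infinity>)\<close>, \<open>T(n) = n(n+1)/2\<close>;
  what remains is the left-hand side divided by \<open>(-q;q)_\<infinity>\<close>. For this column sum, multiply by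
  \<open>(-q;q)_\<infinity>\<close>, expand \<open>(-q^{N+1};q)_\<infinity>\<close> by Euler's formula
  \<open>(-z;q)_\<infinity> = \<Sum>_l q^{l(l-1)/2} z^l/(q;q)_l\<close> and regroup along the antidiagonals, on which the
  coefficients sum to \<open>(1;q)_N = 0\<close> for \<open>N > 0\<close>. All rearrangements are licensed by absolute
  convergence: \<open>|q^{a k^2 + b k}| \<le> C |q|^{|k|}\<close>, and \<open>(q;q)_n\<close>, \<open>(-q;q)_n\<close> stay bounded away from
  \<open>0\<close> and \<open>\<infinity>\<close>.
\<close>

lemma geometric_sum_le:
  fixes r :: real assumes "0 \<le> r" "r < 1"
  shows "(\<Sum>k<n. r^k) \<le> 1/(1-r)"
proof -
  have "(\<Sum>k<n. r^k) = (1 - r^n)/(1-r)" using assms by (simp add: sum_gp_strict)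
  also have "\<dots> \<le> 1/(1-r)" using assms by (intro divide_right_mono) auto
  finally show ?thesis .
qed

lemma norm_prod_one_minus_le:
  fixes x :: "nat \<Rightarrow> complex" and r :: real
  assumes r: "0 \<le> r" "r < 1" and x: "\<And>k. norm (x k) \<le> r ^ Suc k"
  shows "norm (\<Prod>k<n. 1 - x k) \<le> exp (1/(1-r))"
proof -
  have "norm (1 - x k) \<le> exp (r^k)" for k
  proof -
    have "norm (1 - x k) \<le> 1 + norm (x k)" by (metis norm_one norm_triangle_ineq4)
    also have "\<dots> \<le> 1 + r^k" using x[of k] r by (simp add: mult_left_le_one_le order_trans)
    also have "\<dots> \<le> exp (r^k)" by simp
    finally show ?thesis .
  qed
  then have "norm (\<Prod>k<n. 1 - x k) \<le> (\<Prod>k<n. exp (r^k))"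
    unfolding prod_norm[symmetric] by (intro prod_mono) auto
  also have "\<dots> = exp (\<Sum>k<n. r^k)" by (simp add: exp_sum)
  also have "\<dots> \<le> exp (1/(1-r))" using geometric_sum_le[OF r] by simp
  finally show ?thesis .
qed

lemma norm_one_minus_ge:
  fixes x :: complex and r :: real
  assumes "norm x \<le> r"
  shows "1 - r \<le> norm (1 - x)"
  using assms by (metis diff_left_mono norm_one norm_triangle_ineq2 order_trans)

lemma prod_one_minus_nonzero:
  fixes x :: "nat \<Rightarrow> complex" and r :: real
  assumes r: "0 \<le> r" "r < 1" and x: "\<And>k. norm (x k) \<le> r ^ Suc k"
  shows "(\<Prod>k<n. 1 - x k) \<noteq> 0"
proof -
  have "r ^ Suc k < 1" for k using r power_decreasing[of 1 "Suc k" r] by simp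
  then have "0 < norm (1 - x k)" for k
    using norm_one_minus_ge[OF x[of k]] by (meson diff_gt_0_iff_gt order_less_le_trans)
  then show ?thesis by (simp add: prod_zero_iff)
qed

lemma inverse_norm_prod_one_minus_le:
  fixes x :: "nat \<Rightarrow> complex" and r :: real
  assumes r: "0 \<le> r" "r < 1" and x: "\<And>k. norm (x k) \<le> r ^ Suc k"
  shows "1 / norm (\<Prod>k<n. 1 - x k) \<le> exp (1/(1-r)^2)"
proof -
  have "1 / norm (1 - x k) \<le> exp (r^k / (1 - r))" for k
  proof -
    have rk: "r ^ Suc k \<le> r^k" "r ^ Suc k \<le> r" "0 < 1 - r ^ Suc k"
      using r power_decreasing[of 1 "Suc k" r] by (auto simp: mult_left_le_one_le)
    have "1 / norm (1 - x k) \<le> 1 / (1 - r ^ Suc k)"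
      using norm_one_minus_ge[OF x[of k]] rk(3)
      by (intro divide_left_mono) (auto intro!: mult_pos_pos simp del: power_Suc)
    also have "\<dots> = 1 + r ^ Suc k / (1 - r ^ Suc k)" using rk(3) by (simp add: field_simps)
    also have "\<dots> \<le> exp (r ^ Suc k / (1 - r ^ Suc k))" by (rule exp_ge_add_one_self)
    also have "\<dots> \<le> exp (r^k / (1 - r))"
      using rk r by (simp add: frac_le)
    finally show ?thesis .
  qed
  then have "(\<Prod>k<n. 1 / norm (1 - x k)) \<le> (\<Prod>k<n. exp (r^k / (1 - r)))"
    by (intro prod_mono) auto
  then have "1 / norm (\<Prod>k<n. 1 - x k) \<le> (\<Prod>k<n. exp (r^k / (1 - r)))"
    by (simp add: prod_norm[symmetric] prod_dividef)
  also have "\<dots> = exp ((\<Sum>k<n. r^k) / (1 - r))" by (simp add: exp_sum sum_divide_distrib)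
  also have "\<dots> \<le> exp (1/(1-r)^2)"
    using divide_right_mono[OF geometric_sum_le[OF r], of "1 - r"] r
    by (simp add: power2_eq_square)
  finally show ?thesis .
qed

lemma summable_on_norm_bound:
  fixes f :: "'a \<Rightarrow> complex"
  assumes "g summable_on A" "\<And>x. x \<in> A \<Longrightarrow> norm (f x) \<le> g x"
  shows "f summable_on A"
  using Infinite_Sum.abs_summable_on_comparison_test'[OF assms]
    summable_on_iff_abs_summable_on_complex
  by blast

lemma summable_on_product:
  fixes g :: "'a \<Rightarrow> real" and h :: "'b \<Rightarrow> real"
  assumes "g summable_on UNIV" "h summable_on UNIV" "\<And>x. 0 \<le> g x" "\<And>y. 0 \<le> h y"
  shows "(\<lambda>(x,y). g x * h y) summable_on UNIV"
proof -
  have "(\<lambda>(x,y). g x * h y) summable_on Sigma UNIV (\<lambda>_. UNIV)"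
  proof (rule summable_on_SigmaI[where g = "\<lambda>x. g x * infsum h UNIV"])
    show "((\<lambda>y. case (x, y) of (x, y) \<Rightarrow> g x * h y) has_sum g x * infsum h UNIV) UNIV" for x
      using has_sum_cmult_right[of h UNIV "infsum h UNIV" "g x"] assms(2)
      by (simp add: summable_iff_has_sum_infsum)
    show "(\<lambda>x. g x * infsum h UNIV) summable_on UNIV"
      using summable_on_cmult_left[OF assms(1)] .
  qed (use assms in auto)
  thus ?thesis by simp
qed

lemma power_summable_on:
  fixes r :: real assumes "0 \<le> r" "r < 1"
  shows "(\<lambda>n::nat. r^n) summable_on UNIV"
  using assms norm_summable_imp_summable_on[of "\<lambda>n. r^n"] by (simp add: summable_geometric)

lemma has_sum_nat_single:
  "((\<lambda>N::nat. if N = 0 then c else 0) has_sum c) UNIV"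
  using has_sum_cong_neutral[of UNIV "{0::nat}" "\<lambda>N. if N = 0 then c else 0"]
    has_sum_finite[of "{0::nat}" "\<lambda>N. if N = 0 then c else 0"]
  by auto


fun tri :: "nat \<Rightarrow> nat" where
  "tri 0 = 0" | "tri (Suc n) = tri n + Suc n"

fun choose2 :: "nat \<Rightarrow> nat" where
  "choose2 0 = 0" | "choose2 (Suc n) = choose2 n + n"

lemma tri_eq: "tri n = n * (n + 1) div 2"
  by (induction n) auto

lemma of_nat_tri: "real (n * (n + 1)) / 2 = real (tri n)"
proof -
  have "even (n * (n + 1))" by simp
  thus ?thesis unfolding tri_eq by (simp add: real_of_nat_div)
qed

lemma tri_add: "tri (k + l) = tri k + k * l + tri l"
  by (induction l) auto

lemma choose2_add_self: "choose2 l + l = tri l"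
  by (induction l) auto

lemma le_tri: "n \<le> tri n"
  by (induction n) auto

lemma tri_add_choose2: "tri (n + m) + choose2 l + Suc (n + m) * l = tri (n + (m + l))"
  using tri_add[of "n + m" l] choose2_add_self[of l] by (simp add: algebra_simps)


lemma qpoch_0 [simp]: "qpoch a p 0 = 1"
  by (simp add: qpoch_def)

lemma qpoch_Suc: "qpoch a p (Suc n) = qpoch a p n * (1 - a * p^n)"
  by (simp add: qpoch_def)

lemma qpoch_square: "qpoch (q^2) (q^2) n = qpoch q q n * qpoch (-q) q n"
  by (induction n) (simp_all add: qpoch_Suc power2_eq_square power_mult_distrib algebra_simps)

lemma qpoch_one_Suc: "qpoch 1 q (Suc n) = 0"
  by (induction n) (simp_all add: qpoch_Suc)

fun qpoch_coeff :: "complex \<Rightarrow> nat \<Rightarrow> nat \<Rightarrow> complex" where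
  "qpoch_coeff q 0 s = (if s = 0 then 1 else 0)"
| "qpoch_coeff q (Suc j) s =
     qpoch_coeff q j s - q^j * (case s of 0 \<Rightarrow> 0 | Suc s' \<Rightarrow> qpoch_coeff q j s')"

lemma qpoch_coeff_eq_0: "j < s \<Longrightarrow> qpoch_coeff q j s = 0"
  by (induction j arbitrary: s) (auto split: nat.split)

lemma qpoch_coeff_0: "qpoch_coeff q j 0 = 1"
  by (induction j) auto

lemma sum_atMost_Suc_case_shift:
  fixes g :: "nat \<Rightarrow> 'a :: comm_semiring_1"
  shows "(\<Sum>s\<le>Suc j. (case s of 0 \<Rightarrow> 0 | Suc s' \<Rightarrow> g s') * x^s) = x * (\<Sum>s\<le>j. g s * x^s)"
  by (subst sum.atMost_Suc_shift) (simp add: sum_distrib_left algebra_simps)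

lemma qpoch_coeff_generating: "(\<Sum>s\<le>j. qpoch_coeff q j s * x^s) = qpoch x q j"
proof (induction j)
  case 0
  show ?case by simp
next
  case (Suc j)
  have "(\<Sum>s\<le>Suc j. qpoch_coeff q (Suc j) s * x^s) = (\<Sum>s\<le>Suc j. qpoch_coeff q j s * x^s)
      - q^j * (\<Sum>s\<le>Suc j. (case s of 0 \<Rightarrow> 0 | Suc s' \<Rightarrow> qpoch_coeff q j s') * x^s)"
    by (simp only: qpoch_coeff.simps left_diff_distrib sum_subtractf sum_distrib_left mult.assoc)
  also have "(\<Sum>s\<le>Suc j. qpoch_coeff q j s * x^s) = (\<Sum>s\<le>j. qpoch_coeff q j s * x^s)"
    by (simp add: qpoch_coeff_eq_0)
  finally show ?case
    unfolding sum_atMost_Suc_case_shift Suc.IH by (simp add: qpoch_Suc algebra_simps)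
qed

lemma sum_qpoch_coeff_eq_0: "j \<ge> 1 \<Longrightarrow> (\<Sum>s\<le>j. qpoch_coeff q j s) = 0"
  using qpoch_coeff_generating[of q j 1] qpoch_one_Suc[of q "j - 1"] by simp

lemma qpoch_coeff_diag: "qpoch_coeff q j j = (-1)^j * q^(choose2 j)"
  by (induction j) (simp_all add: qpoch_coeff_eq_0 power_add)

lemma qpoch_coeff_closed_form:
  assumes "s \<le> j"
  shows "qpoch_coeff q j s * qpoch q q s * qpoch q q (j - s) = (-1)^s * q^(choose2 s) * qpoch q q j"
  using assms
proof (induction j arbitrary: s)
  case 0
  then show ?case by simp
next
  case (Suc j s)
  consider "s = 0" | "s = Suc j" | u e where "s = Suc u" "j = u + Suc e"
  proof (cases s)
    case (Suc u)
    with Suc.prems have "u = j \<or> u < j" by auto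
    then show ?thesis using Suc that less_iff_Suc_add[of u j] by auto
  qed
  then show ?case
  proof cases
    case 1
    then show ?thesis by (simp add: qpoch_coeff_0)
  next
    case 2
    then show ?thesis by (simp add: qpoch_coeff_diag)
  next
    case 3
    have IH1: "qpoch_coeff q j (Suc u) * qpoch q q (Suc u) * qpoch q q e
                 = (-1)^(Suc u) * q^(choose2 (Suc u)) * qpoch q q j"
      using Suc.IH[of "Suc u"] 3 by simp
    have IH2: "qpoch_coeff q j u * qpoch q q u * qpoch q q (Suc e)
                 = (-1)^u * q^(choose2 u) * qpoch q q j"
      using Suc.IH[of u] 3 by simp
    have "qpoch_coeff q (Suc j) s * qpoch q q s * qpoch q q (Suc j - s)
        = qpoch_coeff q j (Suc u) * qpoch q q (Suc u) * qpoch q q e * (1 - q * q^e)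
          - q^j * (qpoch_coeff q j u * qpoch q q u * qpoch q q (Suc e)) * (1 - q * q^u)"
      using 3 by (simp add: qpoch_Suc algebra_simps)
    also have "\<dots> = (-1)^(Suc u) * q^(choose2 u) * qpoch q q j
                        * (q^u * (1 - q * q^e) + q^j * (1 - q * q^u))"
      unfolding IH1 IH2 by (simp only: choose2.simps power_add power_Suc) algebra
    also have "q^u * (1 - q * q^e) + q^j * (1 - q * q^u) = q^u * (1 - q * q^j)"
      unfolding 3 by (simp only: power_add power_Suc) algebra
    finally show ?thesis
      using 3 by (simp only: qpoch_Suc choose2.simps power_add power_Suc) (simp add: algebra_simps)
  qed
qed


locale qseries =
  fixes q :: complex
  assumes norm_q_less_1: "norm q < 1" and q_nonzero: "q \<noteq> 0"
begin

definition qbound :: real where "qbound = exp (1/(1 - norm q)^2)"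

lemma exp_le_qbound: "exp (1/(1 - norm q)) \<le> qbound"
proof -
  have a: "0 < 1 - norm q" "1 - norm q \<le> 1" using norm_q_less_1 by auto
  have "1/(1 - norm q) \<le> 1/(1 - norm q)^2"
    using a by (simp add: divide_simps power2_eq_square)
  thus ?thesis unfolding qbound_def by simp
qed

lemma qbound_pos: "0 < qbound" unfolding qbound_def by simp

lemma prod_one_minus_bounds:
  fixes x :: "nat \<Rightarrow> complex"
  assumes "\<And>k. norm (x k) \<le> norm q ^ Suc k"
  shows "norm (\<Prod>k<n. 1 - x k) \<le> qbound" "(\<Prod>k<n. 1 - x k) \<noteq> 0"
    "1 / norm (\<Prod>k<n. 1 - x k) \<le> qbound"
  using order_trans[OF norm_prod_one_minus_le[of "norm q" x n] exp_le_qbound]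
    prod_one_minus_nonzero[of "norm q" x n]
    inverse_norm_prod_one_minus_le[of "norm q" x n, folded qbound_def] assms norm_q_less_1
  by auto

lemma qpoch_q_bounds:
  "norm (qpoch q q n) \<le> qbound" "qpoch q q n \<noteq> 0" "1 / norm (qpoch q q n) \<le> qbound"
  using prod_one_minus_bounds[of "\<lambda>k. q * q^k" n] unfolding qpoch_def
  by (auto simp: norm_mult norm_power)

lemma qpoch_neg_q_bounds:
  "norm (qpoch (-q) q n) \<le> qbound" "qpoch (-q) q n \<noteq> 0" "1 / norm (qpoch (-q) q n) \<le> qbound"
  using prod_one_minus_bounds[of "\<lambda>k. -q * q^k" n] unfolding qpoch_def
  by (auto simp: norm_mult norm_power)

lemma inverse_norm_qpoch_square_le: "1 / norm (qpoch (q^2) (q^2) n) \<le> qbound * qbound"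
proof -
  have "1 / norm (qpoch (q^2) (q^2) n) = (1 / norm (qpoch q q n)) * (1 / norm (qpoch (-q) q n))"
    by (simp add: qpoch_square norm_mult)
  also have "\<dots> \<le> qbound * qbound"
    using qpoch_q_bounds(3) qpoch_neg_q_bounds(3) qbound_pos by (intro mult_mono) auto
  finally show ?thesis .
qed

lemma power_mult_div_qpoch:
  "q^(i*j) / qpoch q q i = (\<Sum>s\<le>i. qpoch_coeff q j s / qpoch q q (i - s))"
proof (induction j arbitrary: i)
  case 0
  have "(\<Sum>s\<le>i. qpoch_coeff q 0 s / qpoch q q (i - s))
          = (\<Sum>s\<in>{0}. qpoch_coeff q 0 s / qpoch q q (i - s))"
    by (intro sum.mono_neutral_right) auto
  then show ?case by simp
next
  case (Suc j i)
  have split: "(\<Sum>s\<le>i. qpoch_coeff q (Suc j) s / qpoch q q (i - s)) = q^(i*j) / qpoch q q i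
      - q^j * (\<Sum>s\<le>i. (case s of 0 \<Rightarrow> 0 | Suc s' \<Rightarrow> qpoch_coeff q j s') / qpoch q q (i - s))"
    unfolding Suc.IH
    by (simp only: qpoch_coeff.simps diff_divide_distrib sum_subtractf sum_distrib_left
        times_divide_eq_right)
  show ?case
  proof (cases i)
    case 0
    then show ?thesis using split by simp
  next
    case (Suc i')
    have shift: "(\<Sum>s\<le>i. (case s of 0 \<Rightarrow> 0 | Suc s' \<Rightarrow> qpoch_coeff q j s') / qpoch q q (i - s))
                   = q^(i'*j) / qpoch q q i'"
      unfolding Suc Suc.IH by (subst sum.atMost_Suc_shift) simp
    have "qpoch q q i' \<noteq> 0" "1 - q * q^i' \<noteq> 0"
      using qpoch_q_bounds(2)[of i] qpoch_q_bounds(2)[of i'] unfolding Suc by (auto simp: qpoch_Suc)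
    then show ?thesis
      unfolding split shift unfolding Suc by (simp add: qpoch_Suc field_simps power_add)
  qed
qed


definition euler_term :: "complex \<Rightarrow> nat \<Rightarrow> complex" where
  "euler_term z l = q^(choose2 l) * z^l / qpoch q q l"

definition euler :: "complex \<Rightarrow> complex" where "euler z = suminf (euler_term z)"

lemma norm_euler_term_le: "norm (euler_term z l) \<le> qbound * norm z ^ l"
proof -
  have "norm (euler_term z l) = norm q ^ choose2 l * norm z ^ l * (1 / norm (qpoch q q l))"
    by (simp add: euler_term_def norm_mult norm_divide norm_power)
  also have "\<dots> \<le> 1 * norm z ^ l * qbound"
    using norm_q_less_1 qpoch_q_bounds(3)[of l]
    by (intro mult_mono) (auto simp: power_le_one)
  finally show ?thesis by (simp add: mult.commute)
qed

lemma summable_norm_euler_term: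
  assumes "norm z < 1" shows "summable (\<lambda>l. norm (euler_term z l))"
proof (rule summable_comparison_test'[where g = "\<lambda>l. qbound * norm z ^ l"])
  show "summable (\<lambda>l. qbound * norm z ^ l)"
    using assms by (intro summable_mult summable_geometric) auto
qed (use norm_euler_term_le in auto)

lemma euler_term_sums: "norm z < 1 \<Longrightarrow> euler_term z sums euler z"
  unfolding euler_def using summable_norm_euler_term summable_norm_cancel summable_sums by blast

lemma euler_term_has_sum: "norm z < 1 \<Longrightarrow> (euler_term z has_sum euler z) UNIV"
  using norm_summable_imp_has_sum summable_norm_euler_term euler_term_sums by blast

lemma euler_term_0: "euler_term z 0 = 1" by (simp add: euler_term_def)

lemma euler_term_Suc: "euler_term z (Suc l) = euler_term (z*q) (Suc l) + z * euler_term (z*q) l"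
proof -
  have nz: "qpoch q q l \<noteq> 0" "1 - q * q^l \<noteq> 0"
    using qpoch_q_bounds(2)[of l] qpoch_q_bounds(2)[of "Suc l"] by (auto simp: qpoch_Suc)
  show ?thesis unfolding euler_term_def qpoch_Suc choose2.simps using nz
    by (simp add: field_simps power_add power_mult_distrib)
qed

lemma euler_eq:
  assumes z: "norm z < 1" shows "euler z = (1 + z) * euler (z*q)"
proof -
  have "norm (z*q) \<le> norm z"
    using norm_q_less_1 by (simp add: norm_mult mult_right_le_one_le)
  then have zq: "norm (z*q) < 1" using z by linarith
  have "(\<lambda>l. euler_term z (Suc l)) sums (euler z - 1)"
    using euler_term_sums[OF z] by (simp add: sums_Suc_iff euler_term_0)
  moreover have "(\<lambda>l. euler_term z (Suc l)) sums ((euler (z*q) - 1) + z * euler (z*q))"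
    unfolding euler_term_Suc[of z] using euler_term_sums[OF zq]
    by (intro sums_add sums_mult) (simp_all add: sums_Suc_iff euler_term_0)
  ultimately have "euler z - 1 = (euler (z*q) - 1) + z * euler (z*q)"
    by (rule sums_unique2)
  then show ?thesis by (simp add: algebra_simps)
qed

lemma euler_q_eq: "euler q = qpoch (-q) q k * euler (q^(Suc k))"
proof (induction k)
  case 0 then show ?case by simp
next
  case (Suc k)
  have "norm q ^ Suc k < 1" using norm_q_less_1 q_nonzero by (intro power_Suc_less_one) auto
  hence "norm (q^Suc k) < 1" by (metis norm_power)
  from euler_eq[OF this] have "euler (q^Suc k) = (1 + q^Suc k) * euler (q^(Suc (Suc k)))"
    by (simp only: power_Suc mult.commute)
  then show ?case using Suc by (simp add: qpoch_Suc algebra_simps)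
qed

lemma norm_euler_minus_1_le:
  assumes "norm z < 1"
  shows "norm (euler z - 1) \<le> qbound * norm z / (1 - norm z)"
proof -
  have "euler z - 1 = (\<Sum>l. euler_term z (Suc l))"
    unfolding euler_def using suminf_split_head[OF sums_summable[OF euler_term_sums[OF assms]]]
    by (simp add: euler_term_0)
  also have "norm \<dots> \<le> (\<Sum>l. qbound * norm z ^ Suc l)"
  proof (rule norm_suminf_le)
    show "summable (\<lambda>l. qbound * norm z ^ Suc l)"
      using assms by (intro summable_mult summable_geometric summable_Suc_iff[THEN iffD2]) auto
  qed (rule norm_euler_term_le)
  also have "\<dots> = qbound * norm z / (1 - norm z)"
    using assms by (simp add: suminf_mult suminf_geometric)
  finally show ?thesis .
qed

lemma euler_power_tendsto_1: "(\<lambda>k. euler (q^(Suc k))) \<longlonglongrightarrow> 1"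
proof -
  have power: "(\<lambda>k. norm q ^ Suc k) \<longlonglongrightarrow> 0"
    using LIMSEQ_Suc[OF LIMSEQ_power_zero[of "norm q"]] norm_q_less_1 by simp
  have bound: "(\<lambda>k. qbound * norm q ^ Suc k / (1 - norm q ^ Suc k)) \<longlonglongrightarrow> 0"
    using tendsto_divide[OF tendsto_mult[OF tendsto_const power]
        tendsto_diff[OF tendsto_const power]]
    by simp
  have "norm (euler (q^Suc k) - 1) \<le> qbound * norm q ^ Suc k / (1 - norm q ^ Suc k)" for k
    using norm_euler_minus_1_le[of "q^Suc k"] power_Suc_less_one[of "norm q" k]
      norm_q_less_1 q_nonzero
    by (simp add: norm_power norm_mult)
  then have "(\<lambda>k. euler (q^Suc k) - 1) \<longlonglongrightarrow> 0"
    by (intro Lim_null_comparison[OF always_eventually bound]) blast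
  thus ?thesis using LIM_zero_iff by blast
qed

lemma euler_q_nonzero: "euler q \<noteq> 0"
proof
  assume "euler q = 0"
  hence "euler (q^Suc k) = 0" for k using euler_q_eq[of k] qpoch_neg_q_bounds(2)[of k] by simp
  hence "(\<lambda>k. euler (q^(Suc k))) \<longlonglongrightarrow> 0" by simp
  with euler_power_tendsto_1 show False using LIMSEQ_unique by fastforce
qed

lemma qpoch_inf_neg_q_eq_euler: "qpoch_inf (-q) q = euler q"
proof -
  have "(\<lambda>k. euler q / euler (q^(Suc k))) \<longlonglongrightarrow> euler q / 1"
    by (intro tendsto_intros euler_power_tendsto_1) auto
  moreover have "euler q / euler (q^(Suc k)) = qpoch (-q) q k" for k
    using euler_q_eq[of k] euler_q_nonzero by (auto simp: field_simps)
  ultimately have "(\<lambda>k. qpoch (-q) q k) \<longlonglongrightarrow> euler q" by simp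
  hence "(\<lambda>n. qpoch (-q) q (Suc n)) \<longlonglongrightarrow> euler q" by (rule LIMSEQ_Suc)
  moreover have "qpoch (-q) q (Suc n) = (\<Prod>i\<le>n. 1 - (-q) * q^(i+0))" for n
    unfolding qpoch_def by (simp add: lessThan_Suc_atMost)
  ultimately have "raw_has_prod (\<lambda>k. 1 - (-q) * q^k) 0 (euler q)"
    unfolding raw_has_prod_def using euler_q_nonzero by simp
  hence "(\<lambda>k. 1 - (-q) * q^k) has_prod euler q" unfolding has_prod_def by blast
  thus ?thesis unfolding qpoch_inf_def by (rule has_prod_unique[symmetric])
qed


lemma qpoch_coeff_div_qpoch:
  "s \<le> j \<Longrightarrow>
     qpoch_coeff q j s / qpoch q q j = (-1)^s * q^(choose2 s) / (qpoch q q s * qpoch q q (j - s))"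
  using qpoch_coeff_closed_form[of s j q] qpoch_q_bounds(2)[of s] qpoch_q_bounds(2)[of "j-s"]
    qpoch_q_bounds(2)[of j]
  by (simp add: field_simps)

lemma norm_qpoch_coeff_le: "norm (qpoch_coeff q j s) \<le> qbound^3"
proof (cases "s \<le> j")
  case True
  have "qpoch_coeff q j s
          = (-1)^s * q^(choose2 s) * qpoch q q j * (1 / qpoch q q s) * (1 / qpoch q q (j - s))"
    using qpoch_coeff_div_qpoch[OF True] qpoch_q_bounds(2)[of j] by (simp add: field_simps)
  then have "norm (qpoch_coeff q j s) = norm q ^ choose2 s * norm (qpoch q q j)
               * (1 / norm (qpoch q q s)) * (1 / norm (qpoch q q (j - s)))"
    by (simp add: norm_mult norm_divide norm_power)
  also have "\<dots> \<le> 1 * qbound * qbound * qbound"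
    using norm_q_less_1 qpoch_q_bounds[of j] qpoch_q_bounds[of s] qpoch_q_bounds[of "j-s"]
      qbound_pos
    by (intro mult_mono) (auto simp: power_le_one)
  finally show ?thesis by (simp add: power3_eq_cube)
next
  case False
  then show ?thesis using qpoch_coeff_eq_0[of j s q] qbound_pos by simp
qed

definition column_coeff :: "nat \<Rightarrow> nat \<Rightarrow> complex" where
  "column_coeff n m = qpoch_coeff q (n+m) m * q^(tri (n+m)) / qpoch (q^2) (q^2) (n+m)"

text \<open>Since \<open>(q^2;q^2)_N = (q;q)_N (-q;q)_N\<close>, multiplying \<open>column_coeff n m\<close> by \<open>(-q;q)_\<infinity>\<close>
  leaves \<open>(-q^{N+1};q)_\<infinity>\<close> with \<open>N = n + m\<close>; these are the terms of its Euler expansion.\<close>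

definition column_expansion :: "nat \<Rightarrow> nat \<Rightarrow> nat \<Rightarrow> complex" where
  "column_expansion n m l =
     qpoch_coeff q (n+m) m * q^(tri (n+m)) / qpoch q q (n+m) * euler_term (q^(Suc (n+m))) l"

lemma column_expansion_has_sum_in_l:
  "((\<lambda>l. column_expansion n m l) has_sum euler q * column_coeff n m) UNIV"
proof -
  let ?z = "q^(Suc (n+m))"
  let ?c = "qpoch_coeff q (n+m) m * q^(tri (n+m)) / qpoch q q (n+m)"
  have "norm ?z < 1"
    using power_Suc_less_one[of "norm q" "n+m"] norm_q_less_1 q_nonzero
    by (simp add: norm_power norm_mult)
  then have "((\<lambda>l. ?c * euler_term ?z l) has_sum ?c * euler ?z) UNIV"
    by (intro has_sum_cmult_right euler_term_has_sum)
  moreover have "?c * euler ?z = euler q * column_coeff n m"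
    unfolding column_coeff_def euler_q_eq[of "n+m"] qpoch_square
    using qpoch_neg_q_bounds(2)[of "n+m"] qpoch_q_bounds(2)[of "n+m"]
    by (simp add: field_simps)
  ultimately show ?thesis unfolding column_expansion_def by simp
qed

lemma column_expansion_antidiagonal:
  assumes "m \<le> N"
  shows "column_expansion n m (N - m)
           = q^(tri (n+N)) / (qpoch q q n * qpoch q q N) * qpoch_coeff q N m"
proof -
  obtain l where l: "N = m + l" using assms le_Suc_ex by blast
  have a: "qpoch_coeff q (n+m) m / qpoch q q (n+m)
             = (-1)^m * q^(choose2 m) / (qpoch q q m * qpoch q q n)"
    using qpoch_coeff_div_qpoch[of m "n+m"] by simp
  have b: "qpoch_coeff q N m / qpoch q q N = (-1)^m * q^(choose2 m) / (qpoch q q m * qpoch q q l)"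
    using qpoch_coeff_div_qpoch[of m N] l by simp
  have p: "q^(tri (n+m)) * (q^(choose2 l) * (q^(Suc (n+m)))^l) = q^(tri (n+N))"
    unfolding l tri_add_choose2[symmetric] by (simp add: power_add power_mult power_mult_distrib)
  have "column_expansion n m (N - m) = (qpoch_coeff q (n+m) m / qpoch q q (n+m))
          * (q^(tri (n+m)) * (q^(choose2 l) * (q^(Suc (n+m)))^l)) / qpoch q q l"
    unfolding column_expansion_def euler_term_def l by simp
  also have "\<dots> = (-1)^m * q^(choose2 m) / (qpoch q q m * qpoch q q l) * q^(tri (n+N)) / qpoch q q n"
    unfolding a p using qpoch_q_bounds(2)[of n] qpoch_q_bounds(2)[of l] qpoch_q_bounds(2)[of m]
    by (simp add: field_simps)
  also have "\<dots> = q^(tri (n+N)) / (qpoch q q n * qpoch q q N) * qpoch_coeff q N m"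
    unfolding b[symmetric] using qpoch_q_bounds(2)[of n] qpoch_q_bounds(2)[of N]
    by (simp add: field_simps)
  finally show ?thesis .
qed

lemma norm_column_expansion_le:
  "norm (column_expansion n m l) \<le> qbound^5 * (norm q ^ m * norm q ^ l)"
proof -
  have z: "norm (q^(Suc (n+m))) \<le> norm q"
    using norm_q_less_1 by (simp add: norm_power norm_mult mult_right_le_one_le power_le_one)
  have t: "norm q ^ tri (n+m) \<le> norm q ^ m"
    using norm_q_less_1 le_tri[of "n+m"] by (intro power_decreasing) auto
  have e: "norm (euler_term (q ^ Suc (n + m)) l) \<le> qbound * norm q ^ l"
    using order_trans[OF norm_euler_term_le mult_left_mono[OF power_mono[OF z]]] qbound_pos
    by simp
  have "norm (column_expansion n m l) = norm (qpoch_coeff q (n+m) m) * norm q ^ tri (n+m)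
          * (1 / norm (qpoch q q (n+m))) * norm (euler_term (q^(Suc (n+m))) l)"
    by (simp add: column_expansion_def norm_mult norm_divide norm_power)
  also have "\<dots> \<le> qbound^3 * norm q ^ m * qbound * (qbound * norm q ^ l)"
    by (intro mult_mono e) (use norm_qpoch_coeff_le t qpoch_q_bounds(3) qbound_pos in auto)
  finally show ?thesis by (simp add: power_numeral_reduce algebra_simps)
qed

lemma column_expansion_summable: "(\<lambda>(m,l). column_expansion n m l) summable_on UNIV"
proof (rule summable_on_norm_bound)
  show "(\<lambda>(m,l). qbound^5 * (norm q ^ m * norm q ^ l)) summable_on UNIV"
    using summable_on_cmult_right[OF summable_on_product[OF power_summable_on power_summable_on]]
      norm_q_less_1
    by (simp add: case_prod_unfold)
qed (use norm_column_expansion_le in auto)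

text \<open>On each antidiagonal \<open>m + l = N\<close> the terms sum to a multiple of \<open>(1;q)_N\<close>.\<close>

lemma column_expansion_has_sum:
  "((\<lambda>(m,l). column_expansion n m l) has_sum q^(tri n) / qpoch q q n) UNIV"
proof -
  define S where "S = infsum (\<lambda>(m,l). column_expansion n m l) UNIV"
  have S: "((\<lambda>(m,l). column_expansion n m l) has_sum S) UNIV"
    unfolding S_def using column_expansion_summable by (simp add: summable_iff_has_sum_infsum)
  have "((\<lambda>(N,m). column_expansion n m (N - m)) has_sum S) (Sigma UNIV (\<lambda>N. {..N}))
      = ((\<lambda>(m,l). column_expansion n m l) has_sum S) UNIV"
    by (rule has_sum_reindex_bij_witness[where j = "\<lambda>(N,m). (m, N - m)"
                                           and i = "\<lambda>(m,l). (m + l, m)"]) auto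
  with S have "((\<lambda>(N,m). column_expansion n m (N - m)) has_sum S) (Sigma UNIV (\<lambda>N. {..N}))"
    by simp
  then have "((\<lambda>N. \<Sum>m\<le>N. column_expansion n m (N - m)) has_sum S) UNIV"
    by (rule has_sum_SigmaD) (auto intro: has_sum_finite)
  moreover have "(\<Sum>m\<le>N. column_expansion n m (N - m))
                   = (if N = 0 then q^(tri n) / qpoch q q n else 0)" for N
  proof -
    have "(\<Sum>m\<le>N. column_expansion n m (N - m))
            = q^(tri (n+N)) / (qpoch q q n * qpoch q q N) * (\<Sum>m\<le>N. qpoch_coeff q N m)"
      unfolding sum_distrib_left by (intro sum.cong) (auto simp: column_expansion_antidiagonal)
    then show ?thesis using sum_qpoch_coeff_eq_0[of N q] by (simp add: qpoch_coeff_0)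
  qed
  ultimately have "((\<lambda>N::nat. if N = 0 then q^(tri n) / qpoch q q n else 0) has_sum S) UNIV"
    by simp
  then have "S = q^(tri n) / qpoch q q n"
    using has_sum_nat_single by (rule has_sum_unique)
  thus ?thesis using S by simp
qed

lemma column_coeff_has_sum: "(column_coeff n has_sum q^(tri n) / (qpoch q q n * euler q)) UNIV"
proof -
  have "((\<lambda>(m,l). column_expansion n m l) has_sum q^(tri n) / qpoch q q n) (Sigma UNIV (\<lambda>_. UNIV))"
    using column_expansion_has_sum by simp
  then have "((\<lambda>m. euler q * column_coeff n m) has_sum q^(tri n) / qpoch q q n) UNIV"
    by (rule has_sum_SigmaD) (use column_expansion_has_sum_in_l in auto)
  from has_sum_cmult_right[OF this, of "1 / euler q"] show ?thesis
    using euler_q_nonzero by (simp add: field_simps)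
qed

end

locale weighted_sum = qseries +
  fixes f :: "int \<Rightarrow> complex" and K \<rho> :: real
  assumes decay_base: "0 \<le> \<rho>" "\<rho> < 1"
    and norm_weight_le: "\<And>k. norm (f k) \<le> K * \<rho> ^ nat \<bar>k\<bar>"
begin

definition lhs_term :: "nat \<times> nat \<Rightarrow> complex" where
  "lhs_term = (\<lambda>(i,j). f (int i - int j) * q^tri j / (qpoch q q i * qpoch q q j))"

definition rhs_term :: "nat \<times> nat \<Rightarrow> complex" where
  "rhs_term = (\<lambda>(i,j). f (int i - int j) * q^(tri j + i*j) / (qpoch q q i * qpoch (q^2) (q^2) j))"

text \<open>The right-hand side expanded by \<open>power_mult_div_qpoch\<close>, indexed by \<open>((t, n), m)\<close>
  with \<open>i = t + m\<close>, \<open>j = n + m\<close>.\<close>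

definition triple_term :: "(nat \<times> nat) \<times> nat \<Rightarrow> complex" where
  "triple_term = (\<lambda>((t,n),m). f (int t - int n) / qpoch q q t * column_coeff n m)"

definition decay :: real where "decay = sqrt (max \<rho> (norm q))"

lemma decay_bounds: "0 \<le> decay" "decay < 1"
  using decay_base norm_q_less_1 by (auto simp: decay_def)

lemma weight_scale_nonneg: "0 \<le> K"
  using order_trans[OF norm_ge_zero norm_weight_le[of 0]] by simp

text \<open>Because \<open>i + j \<le> 2 (|i - j| + j)\<close>, decay in \<open>i - j\<close> together with \<open>|q|^j\<close> controls both
  indices.\<close>

lemma norm_weight_mult_le: "norm (f (int i - int j)) * norm q ^ j \<le> K * (decay^i * decay^j)"
proof -
  define t where "t = max \<rho> (norm q)"
  define d where "d = nat \<bar>int i - int j\<bar>"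
  have t: "0 \<le> t" "t \<le> 1" "\<rho> \<le> t" "norm q \<le> t"
    using decay_base norm_q_less_1 by (auto simp: t_def)
  have "norm (f (int i - int j)) * norm q ^ j \<le> K * \<rho>^d * norm q ^ j"
    unfolding d_def by (intro mult_right_mono norm_weight_le) auto
  also have "\<dots> \<le> K * (t^d * t^j)"
    using t weight_scale_nonneg decay_base
    by (simp only: mult.assoc) (intro mult_left_mono mult_mono power_mono, auto)
  also have "t^d * t^j = decay^(2 * (d + j))"
    using t by (simp add: decay_def t_def power_mult power_add real_sqrt_pow2)
  also have "decay^(2 * (d + j)) \<le> decay^(i + j)"
    using decay_bounds by (intro power_decreasing) (auto simp: d_def)
  finally show ?thesis using weight_scale_nonneg by (simp add: power_add mult_left_mono)
qed

lemma decay_pair_summable: "(\<lambda>(i,j). C * (decay^i * decay^j)) summable_on UNIV"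
  using summable_on_cmult_right[OF summable_on_product[OF power_summable_on power_summable_on]]
    decay_bounds
  by (simp add: case_prod_unfold)

lemma norm_power_tri_le: "norm q ^ (tri j + e) \<le> norm q ^ j"
  using norm_q_less_1 le_tri[of j] by (intro power_decreasing) auto

lemma lhs_term_summable: "lhs_term summable_on UNIV"
proof (rule summable_on_norm_bound[OF decay_pair_summable[of "K * qbound^2"]])
  fix x :: "nat \<times> nat"
  obtain i j where x: "x = (i,j)" by fastforce
  have "norm (lhs_term x) = (norm (f (int i - int j)) * norm q ^ (tri j + 0))
          * (1 / norm (qpoch q q i)) * (1 / norm (qpoch q q j))"
    unfolding lhs_term_def x by (simp add: norm_mult norm_divide norm_power)
  also have "\<dots> \<le> K * (decay^i * decay^j) * qbound * qbound"
    using order_trans[OF mult_left_mono[OF norm_power_tri_le[of j 0]] norm_weight_mult_le[of i j]]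
    by (intro mult_mono[OF mult_mono] qpoch_q_bounds(3))
      (use weight_scale_nonneg decay_bounds qbound_pos in auto)
  finally show "norm (lhs_term x) \<le> (case x of (i, j) \<Rightarrow> K * qbound^2 * (decay^i * decay^j))"
    unfolding x by (simp add: power2_eq_square algebra_simps)
qed

lemma rhs_term_summable: "rhs_term summable_on UNIV"
proof (rule summable_on_norm_bound[OF decay_pair_summable[of "K * qbound^3"]])
  fix x :: "nat \<times> nat"
  obtain i j where x: "x = (i,j)" by fastforce
  have "norm (rhs_term x) = (norm (f (int i - int j)) * norm q ^ (tri j + i*j))
          * (1 / norm (qpoch q q i)) * (1 / norm (qpoch (q^2) (q^2) j))"
    unfolding rhs_term_def x by (simp add: norm_mult norm_divide norm_power)
  also have "\<dots> \<le> K * (decay^i * decay^j) * qbound * (qbound * qbound)"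
    using order_trans[OF mult_left_mono[OF norm_power_tri_le[of j "i*j"]]
        norm_weight_mult_le[of i j]]
    by (intro mult_mono[OF mult_mono] qpoch_q_bounds(3) inverse_norm_qpoch_square_le)
      (use weight_scale_nonneg decay_bounds qbound_pos in auto)
  finally show "norm (rhs_term x) \<le> (case x of (i, j) \<Rightarrow> K * qbound^3 * (decay^i * decay^j))"
    unfolding x by (simp add: power3_eq_cube algebra_simps)
qed

lemma norm_triple_term_le:
  "norm (triple_term ((t,n),m)) \<le> K * qbound^6 * (decay^t * decay^n) * norm q ^ m"
proof -
  have weight:
    "norm (f (int t - int n)) * norm q ^ tri (n+m) \<le> K * (decay^t * decay^n) * norm q ^ m"
  proof -
    have "norm q ^ tri (n+m) \<le> norm q ^ n * norm q ^ m"
      using norm_power_tri_le[of "n+m" 0] by (simp add: power_add)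
    then have "norm (f (int t - int n)) * norm q ^ tri (n+m)
                 \<le> (norm (f (int t - int n)) * norm q ^ n) * norm q ^ m"
      by (simp add: mult_left_mono mult.assoc)
    also have "\<dots> \<le> K * (decay^t * decay^n) * norm q ^ m"
      by (intro mult_right_mono norm_weight_mult_le) auto
    finally show ?thesis .
  qed
  have "norm (triple_term ((t,n),m)) = (norm (f (int t - int n)) * norm q ^ tri (n+m))
          * (1 / norm (qpoch q q t)) * norm (qpoch_coeff q (n+m) m)
          * (1 / norm (qpoch (q^2) (q^2) (n+m)))"
    by (simp add: triple_term_def column_coeff_def norm_mult norm_divide norm_power)
  also have "\<dots> \<le> K * (decay^t * decay^n) * norm q ^ m * qbound * qbound^3 * (qbound * qbound)"
    by (intro mult_mono[OF mult_mono[OF mult_mono]] weight qpoch_q_bounds(3)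
          norm_qpoch_coeff_le inverse_norm_qpoch_square_le)
      (use weight_scale_nonneg decay_bounds qbound_pos in auto)
  finally show ?thesis by (simp add: power_numeral_reduce algebra_simps)
qed

lemma triple_term_summable: "triple_term summable_on UNIV"
proof (rule summable_on_norm_bound)
  show "(\<lambda>(p,m). (case p of (t,n) \<Rightarrow> K * qbound^6 * (decay^t * decay^n)) * norm q ^ m)
          summable_on UNIV"
    using summable_on_product[OF decay_pair_summable power_summable_on] norm_q_less_1
      weight_scale_nonneg decay_bounds
    by (auto simp: case_prod_unfold)
qed (use norm_triple_term_le in auto)

lemma infsum_triple_term_by_columns: "infsum triple_term UNIV = infsum lhs_term UNIV / euler q"
proof -
  have "(triple_term has_sum infsum triple_term UNIV) (Sigma UNIV (\<lambda>_. UNIV))"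
    using triple_term_summable by (simp add: summable_iff_has_sum_infsum)
  moreover have "((\<lambda>m. triple_term (x, m)) has_sum lhs_term x / euler q) UNIV" for x
  proof -
    obtain t n where x: "x = (t,n)" by fastforce
    have "f (int t - int n) / qpoch q q t * (q^(tri n) / (qpoch q q n * euler q))
            = lhs_term x / euler q"
      unfolding x lhs_term_def using euler_q_nonzero qpoch_q_bounds(2)[of t] qpoch_q_bounds(2)[of n]
      by (simp add: field_simps)
    then show ?thesis
      using has_sum_cmult_right[OF column_coeff_has_sum[of n], of "f (int t - int n) / qpoch q q t"]
      unfolding x triple_term_def by simp
  qed
  ultimately have "((\<lambda>x. lhs_term x / euler q) has_sum infsum triple_term UNIV) UNIV"
    by (rule has_sum_SigmaD)
  moreover have "((\<lambda>x. lhs_term x / euler q) has_sum infsum lhs_term UNIV / euler q) UNIV"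
    using lhs_term_summable by (intro has_sum_divide_const) (simp add: summable_iff_has_sum_infsum)
  ultimately show ?thesis by (rule has_sum_unique)
qed

lemma infsum_triple_term_by_diagonals: "infsum triple_term UNIV = infsum rhs_term UNIV"
proof -
  have "((\<lambda>((i,j),k). triple_term ((i-k, j-k), k)) has_sum infsum triple_term UNIV)
          (Sigma UNIV (\<lambda>(i,j). {..min i j}))
      = (triple_term has_sum infsum triple_term UNIV) UNIV"
    by (rule has_sum_reindex_bij_witness[where j = "\<lambda>((i,j),k). ((i-k, j-k), k)"
                                           and i = "\<lambda>((t,n),m). ((t+m, n+m), m)"]) auto
  then have "((\<lambda>((i,j),k). triple_term ((i-k, j-k), k)) has_sum infsum triple_term UNIV)
               (Sigma UNIV (\<lambda>(i,j). {..min i j}))"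
    using triple_term_summable by (simp add: summable_iff_has_sum_infsum)
  moreover have "((\<lambda>k. triple_term ((i-k, j-k), k)) has_sum rhs_term (i,j)) {..min i j}" for i j
  proof -
    have "(\<Sum>k\<le>min i j. triple_term ((i-k, j-k), k))
            = f (int i - int j) * q^(tri j) / qpoch (q^2) (q^2) j
                * (\<Sum>k\<le>min i j. qpoch_coeff q j k / qpoch q q (i - k))"
      unfolding sum_distrib_left
      by (intro sum.cong)
        (auto simp: triple_term_def column_coeff_def of_nat_diff divide_inverse mult_ac)
    also have "(\<Sum>k\<le>min i j. qpoch_coeff q j k / qpoch q q (i - k))
                 = (\<Sum>k\<le>i. qpoch_coeff q j k / qpoch q q (i - k))"
      by (intro sum.mono_neutral_left) (auto simp: qpoch_coeff_eq_0)
    also have "\<dots> = q^(i*j) / qpoch q q i"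
      by (rule power_mult_div_qpoch[symmetric])
    finally have "(\<Sum>k\<le>min i j. triple_term ((i-k, j-k), k)) = rhs_term (i,j)"
      unfolding rhs_term_def by (simp add: power_add field_simps)
    then show ?thesis
      using has_sum_finite[of "{..min i j}" "\<lambda>k. triple_term ((i - k, j - k), k)"] by simp
  qed
  ultimately have "(rhs_term has_sum infsum triple_term UNIV) UNIV"
    by (intro has_sum_SigmaD[of _ UNIV "\<lambda>(i,j). {..min i j}"]) auto
  then show ?thesis by (rule infsumI[symmetric])
qed

theorem weighted_double_sum_identity:
  "lhs_term summable_on UNIV \<and> rhs_term summable_on UNIV \<and>
   infsum lhs_term UNIV = qpoch_inf (-q) q * infsum rhs_term UNIV"
  using lhs_term_summable rhs_term_summable euler_q_nonzero
    infsum_triple_term_by_columns infsum_triple_term_by_diagonals qpoch_inf_neg_q_eq_euler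
  by (simp add: field_simps)

end

lemma quadratic_ge_abs:
  fixes a b k :: real assumes "a > 0"
  shows "a*k^2 + b*k \<ge> \<bar>k\<bar> - (\<bar>b\<bar>+1)^2/(4*a)"
proof -
  have "0 \<le> a*(\<bar>k\<bar> - (\<bar>b\<bar>+1)/(2*a))^2" using assms by simp
  moreover have "a*(\<bar>k\<bar> - (\<bar>b\<bar>+1)/(2*a))^2 = a*k^2 - (\<bar>b\<bar>+1)*\<bar>k\<bar> + (\<bar>b\<bar>+1)^2/(4*a)"
    using assms by (simp add: power2_eq_square field_simps)
  moreover have "b*k \<ge> - (\<bar>b\<bar>*\<bar>k\<bar>)"
    by (metis abs_ge_minus_self abs_mult minus_le_iff)
  ultimately show ?thesis by (simp add: algebra_simps)
qed

lemma powr_quadratic_le: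
  fixes a b r :: real and k :: int
  assumes "a > 0" "0 < r" "r < 1"
  shows "r powr (a * of_int k ^ 2 + b * of_int k)
           \<le> r powr (- ((\<bar>b\<bar>+1)^2/(4*a))) * r ^ nat \<bar>k\<bar>"
proof -
  let ?C = "(\<bar>b\<bar>+1)^2/(4*a)"
  have "r powr (a * of_int k ^ 2 + b * of_int k) \<le> r powr (- ?C + real (nat \<bar>k\<bar>))"
    using quadratic_ge_abs[OF assms(1), of "of_int k" b] assms by (intro powr_mono') auto
  also have "\<dots> = r powr (- ?C) * r powr real (nat \<bar>k\<bar>)"
    by (rule powr_add)
  also have "\<dots> = r powr (- ?C) * r ^ nat \<bar>k\<bar>"
    using assms by (simp only: powr_realpow)
  finally show ?thesis .
qed

theorem mainTheorem2:
  fixes a b :: real and q :: complex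
  assumes "a > 0" and "q \<noteq> 0" and "norm q < 1"
  defines "L \<equiv> (\<lambda>(i::nat, j::nat).
      q powr complex_of_real (a * (real i - real j)^2 + b * (real i - real j)
                              + real (j * (j + 1)) / 2)
      / (qpoch q q i * qpoch q q j))"
    and "R \<equiv> (\<lambda>(i::nat, j::nat).
      q powr complex_of_real (a * (real i - real j)^2 + b * (real i - real j)
                              + real (j * (j + 1)) / 2 + real (i * j))
      / (qpoch q q i * qpoch (q^2) (q^2) j))"
  shows "L summable_on UNIV \<and> R summable_on UNIV \<and>
         infsum L UNIV = qpoch_inf (-q) q * infsum R UNIV"
proof -
  define f where "f k = q powr complex_of_real (a * of_int k ^ 2 + b * of_int k)" for k :: int
  interpret weighted_sum q f "norm q powr (- ((\<bar>b\<bar>+1)^2/(4*a)))" "norm q"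
  proof
    show "norm (f k) \<le> norm q powr (- ((\<bar>b\<bar>+1)^2/(4*a))) * norm q ^ nat \<bar>k\<bar>" for k
      unfolding f_def
      using powr_quadratic_le[where r = "norm q" and k = k and b = b, OF assms(1)] assms
      by (simp add: norm_powr_real_powr')
  qed (use assms in auto)
  have powr_add_nat: "q powr complex_of_real (x + real n) = q powr complex_of_real x * q^n"
    for x n
    using assms(2) by (simp add: powr_add powr_nat')
  have "L = lhs_term"
    unfolding L_def lhs_term_def f_def of_nat_tri powr_add_nat by simp
  moreover have "R = rhs_term"
    unfolding R_def rhs_term_def f_def of_nat_tri add.assoc[of _ "real (tri _)"]
      of_nat_add[symmetric] powr_add_nat
    by simp
  ultimately show ?thesis using weighted_double_sum_identity by simp
qed

end
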